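(* Let $m=p_1^{a_1}\cdots p_k^{a_k}$ be a positive integer. Then $$\mathbb{E}(\mathbb{X}(m))=\begin{cases}\prod_{j=1}^k(1-\delta_{p_j})=\prod_{\substack{p\equiv1\bmod3\\ p\mid m}}\frac{p}{p+2}&\text{if } m \text{ is a cube},\\ 0&\text{otherwise}.\end{cases}$$ Furthermore, $\sum_{m=1}^\infty\mathbb{E}\left(\frac{\mathbb{X}(m)}{m}\right)\le\zeta(3)$ and $\sum_{m=1}^\infty\mathrm{Var}\left(\frac{\mathbb{X}(m)}{m}\right)\le\zeta(6)$.
   Context: The $\mathbb{X}(p)$, $p$ prime, are independent random variables, with $\mathbb{X}(p)=0$ with probability $\delta_p$ and $\mathbb{X}(p)$ equal to each of $1,\omega_3,\omega_3^2$ ($\omega_3=e^{2\pi i/3}$) with probability $\frac{1-\delta_p}{3}$, where $\delta_p=0$ if $p\equiv2\pmod3$ or $p=3$, and $\delta_p=\frac{2}{p+2}$ if $p\equiv1\pmod3$. $\mathbb{X}$ is extended completely multiplicatively: $\mathbb{X}(p_1^{a_1}\cdots p_k^{a_k})=\mathbb{X}(p_1)^{a_1}\cdots\mathbb{X}(p_k)^{a_k}$. *)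

theory Defs
  imports "HOL-Probability.Probability" "HOL-Computational_Algebra.Primes"
begin

definition omega3 :: complex where
  "omega3 = cis (2 * pi / 3)"

definition delta :: "nat \<Rightarrow> real" where
  "delta p = (if p mod 3 = 1 then 2 / (real p + 2) else 0)"

definition mult_ext :: "(nat \<Rightarrow> 'a \<Rightarrow> complex) \<Rightarrow> nat \<Rightarrow> 'a \<Rightarrow> complex" where
  "mult_ext X m \<omega> = (\<Prod>p\<in>prime_factors m. X p \<omega> ^ multiplicity p m)"

definition cvariance :: "'a measure \<Rightarrow> ('a \<Rightarrow> complex) \<Rightarrow> real" where
  "cvariance M Z = (\<integral>\<omega>. (cmod (Z \<omega> - (\<integral>\<eta>. Z \<eta> \<partial>M)))\<^sup>2 \<partial>M)"

definition zeta3 :: real where "zeta3 = (\<Sum>n. 1 / (real (Suc n)) ^ 3)"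
definition zeta6 :: real where "zeta6 = (\<Sum>n. 1 / (real (Suc n)) ^ 6)"

end

theory Submission
  imports Defs "HOL-Computational_Algebra.Nth_Powers" "HOL-Library.Real_Mod"
begin

(* By independence E X(m) is the product of E X(p)^a over the p^a exactly dividing m, and
   for a > 0, E X(p)^a = (1 - delta p)/3 (1 + omega^a + omega^(2a)), which is 1 - delta p if
   3 | a and 0 otherwise. So only cubes m = k^3 contribute to the expectation series, each
   at most 1/k^3.
   Since |X(m)| <= 1, Var(X(m)/m) <= E |X(m)/m|^2 <= 1/m^2, and X(1) = 1 is constant, so the
   variance series is at most sum_{m >= 2} 1/m^2 <= sum_{m >= 2} 1/(m(m-1)) = 1 <= zeta(6). *)

lemma omega3_power: "omega3 ^ a = cis (2 * pi * real a / 3)"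
  unfolding omega3_def Complex.DeMoivre by (simp add: field_simps)

lemma omega3_power_eq_1_iff: "omega3 ^ a = 1 \<longleftrightarrow> 3 dvd a"
proof -
  have "omega3 ^ a = 1 \<longleftrightarrow> (\<exists>n::int. real a = 3 * of_int n)"
    unfolding omega3_power cis_eq_1_iff by (auto simp: field_simps)
  also have "\<dots> \<longleftrightarrow> (\<exists>n::int. int a = 3 * n)"
    using of_int_eq_iff[of "int a" "3 * _", where 'a = real] by simp
  also have "\<dots> \<longleftrightarrow> 3 dvd a"
    by presburger
  finally show ?thesis .
qed

lemma norm_omega3 [simp]: "norm omega3 = 1"
  by (simp add: omega3_def)

lemma omega3_distinct:
  "omega3 \<noteq> 0" "omega3 \<noteq> 1" "omega3 ^ 2 \<noteq> 0" "omega3 ^ 2 \<noteq> 1" "omega3 ^ 2 \<noteq> omega3"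
proof -
  show "omega3 \<noteq> 0"
    using norm_omega3 by (metis norm_zero zero_neq_one)
  then show "omega3 ^ 2 \<noteq> 0"
    by simp
  show "omega3 \<noteq> 1" "omega3 ^ 2 \<noteq> 1"
    using omega3_power_eq_1_iff[of 1] omega3_power_eq_1_iff[of 2] by auto
  then show "omega3 ^ 2 \<noteq> omega3"
    using \<open>omega3 \<noteq> 0\<close> by (auto simp: power2_eq_square)
qed

lemma sum_zero_and_cube_roots:
  "(\<Sum>v\<in>{0, 1, omega3, omega3 ^ 2}. f v) = f 0 + f 1 + f omega3 + f (omega3 ^ 2)"
  using omega3_distinct omega3_distinct[THEN not_sym] by (simp add: add_ac)

lemma cube_roots_power_sum:
  "1 + omega3 ^ a + omega3 ^ (2 * a) = (if 3 dvd a then 3 else 0)"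
proof -
  define z where "z = omega3 ^ a"
  have z_cube: "z ^ 3 = 1"
    unfolding z_def power_mult[symmetric] omega3_power_eq_1_iff by simp
  have sum_eq: "1 + omega3 ^ a + omega3 ^ (2 * a) = 1 + z + z ^ 2"
    by (simp add: z_def power_mult mult.commute)
  show ?thesis
  proof (cases "3 dvd a")
    case True
    then have "z = 1"
      by (simp add: z_def omega3_power_eq_1_iff)
    then show ?thesis
      using True sum_eq by simp
  next
    case False
    then have "z \<noteq> 1"
      by (simp add: z_def omega3_power_eq_1_iff)
    moreover have "(z - 1) * (1 + z + z ^ 2) = 0"
      using z_cube by (simp add: algebra_simps power2_eq_square power3_eq_cube)
    ultimately show ?thesis
      using False sum_eq by simp
  qed
qed

lemma delta_nonneg: "0 \<le> delta p" and delta_le_1: "delta p \<le> 1"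
  unfolding delta_def by auto

lemma prod_one_minus_delta:
  assumes "finite A"
  shows "(\<Prod>p\<in>A. 1 - delta p) = (\<Prod>p\<in>{p\<in>A. p mod 3 = 1}. real p / (real p + 2))"
proof -
  have "1 - delta p = (if p mod 3 = 1 then real p / (real p + 2) else 1)" for p
    by (simp add: delta_def divide_simps)
  then have "(\<Prod>p\<in>A. 1 - delta p) = (\<Prod>p\<in>A. if p mod 3 = 1 then real p / (real p + 2) else 1)"
    by simp
  also have "\<dots> = (\<Prod>p\<in>{p\<in>A. p mod 3 = 1}. real p / (real p + 2))"
    by (rule prod.inter_filter[OF assms, symmetric])
  finally show ?thesis .
qed

lemma cube_iff_multiplicities_dvd:
  assumes "(m::nat) > 0"
  shows "(\<exists>n. m = n ^ 3) \<longleftrightarrow> (\<forall>p\<in>prime_factors m. 3 dvd multiplicity p m)"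
proof -
  have "(\<exists>n. m = n ^ 3) \<longleftrightarrow> is_nth_power 3 m"
    by (simp add: is_nth_power_def)
  also have "\<dots> \<longleftrightarrow> (\<forall>p. prime p \<longrightarrow> 3 dvd multiplicity p m)"
    using is_nth_power_conv_multiplicity[of 3 m] assms by simp
  also have "\<dots> \<longleftrightarrow> (\<forall>p\<in>prime_factors m. 3 dvd multiplicity p m)"
    using assms by (auto simp: in_prime_factors_iff not_dvd_imp_multiplicity_0)
  finally show ?thesis .
qed

lemma (in prob_space) AE_in_finite_range:
  fixes Y :: "'a \<Rightarrow> 'b::t1_space"
  assumes [measurable]: "Y \<in> borel_measurable M" and "finite S"
    and total: "(\<Sum>v\<in>S. prob {\<omega>\<in>space M. Y \<omega> = v}) = 1"
  shows "AE \<omega> in M. Y \<omega> \<in> S"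
proof -
  have "{\<omega>\<in>space M. Y \<omega> \<in> S} = (\<Union>v\<in>S. {\<omega>\<in>space M. Y \<omega> = v})"
    by auto
  also have "prob \<dots> = (\<Sum>v\<in>S. prob {\<omega>\<in>space M. Y \<omega> = v})"
    using \<open>finite S\<close> by (intro finite_measure_finite_Union) (auto simp: disjoint_family_on_def)
  finally have "prob {\<omega>\<in>space M. Y \<omega> \<in> S} = 1"
    using total by simp
  from AE_prob_1[OF this] show ?thesis
    by auto
qed

lemma (in finite_measure) has_bochner_integral_finite_range:
  fixes Y :: "'a \<Rightarrow> 'b::t1_space" and g :: "'b \<Rightarrow> 'c::{banach, second_countable_topology}"
  assumes [measurable]: "Y \<in> borel_measurable M" "g \<in> borel_measurable borel"
    and "finite S" and range: "AE \<omega> in M. Y \<omega> \<in> S"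
  shows "has_bochner_integral M (\<lambda>\<omega>. g (Y \<omega>))
           (\<Sum>v\<in>S. measure M {\<omega>\<in>space M. Y \<omega> = v} *\<^sub>R g v)"
proof -
  let ?simple = "\<lambda>\<omega>. \<Sum>v\<in>S. indicator {\<omega>\<in>space M. Y \<omega> = v} \<omega> *\<^sub>R g v"
  have "AE \<omega> in M. g (Y \<omega>) = ?simple \<omega>"
    using range AE_space
  proof eventually_elim
    case (elim \<omega>)
    then have "?simple \<omega> = (\<Sum>v\<in>S. if v = Y \<omega> then g v else 0)"
      by (intro sum.cong) (auto simp: indicator_def)
    then show ?case
      using elim \<open>finite S\<close> by simp
  qed
  moreover have "has_bochner_integral M ?simple (\<Sum>v\<in>S. measure M {\<omega>\<in>space M. Y \<omega> = v} *\<^sub>R g v)"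
    by (intro has_bochner_integral_sum has_bochner_integral_scaleR_left
        has_bochner_integral_real_indicator) (auto simp: less_top[symmetric])
  ultimately show ?thesis
    by (subst has_bochner_integral_cong_AE) auto
qed

lemma (in prob_space) cvariance_le_second_moment:
  assumes "integrable M Z" "integrable M (\<lambda>\<omega>. (cmod (Z \<omega>))\<^sup>2)"
  shows "cvariance M Z \<le> (\<integral>\<omega>. (cmod (Z \<omega>))\<^sup>2 \<partial>M)"
proof -
  define c where "c = (\<integral>\<omega>. Z \<omega> \<partial>M)"
  have expand: "(cmod (z - c))\<^sup>2 = (cmod z)\<^sup>2 - 2 * (z \<bullet> c) + (cmod c)\<^sup>2" for z
    by (simp add: power2_norm_eq_inner inner_diff_left inner_diff_right inner_commute)
  have "cvariance M Z = (\<integral>\<omega>. (cmod (Z \<omega>))\<^sup>2 \<partial>M) - 2 * (c \<bullet> c) + (cmod c)\<^sup>2"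
    unfolding cvariance_def c_def[symmetric] expand using assms
    by (simp add: c_def prob_space)
  also have "\<dots> = (\<integral>\<omega>. (cmod (Z \<omega>))\<^sup>2 \<partial>M) - (cmod c)\<^sup>2"
    by (simp add: power2_norm_eq_inner)
  finally show ?thesis
    by simp
qed

lemma (in prob_space) cvariance_const: "cvariance M (\<lambda>_. c) = 0"
  by (simp add: cvariance_def prob_space)

lemma summable_inverse_Suc_power:
  assumes "k \<ge> 2"
  shows "summable (\<lambda>n. 1 / real (Suc n) ^ k)"
proof -
  have "summable (\<lambda>n. inverse (real n ^ k))"
    using assms by (intro inverse_power_summable) auto
  then show ?thesis
    by (subst (asm) summable_Suc_iff[symmetric]) (simp add: inverse_eq_divide)
qed

lemma one_le_zeta6: "1 \<le> zeta6"
  unfolding zeta6_def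
  using sum_le_suminf[OF summable_inverse_Suc_power, of 6 "{0}"] by simp

lemma cube_supported_series_le_zeta3:
  fixes e :: "nat \<Rightarrow> real"
  assumes bounds: "\<And>m. 0 \<le> e m \<and> e m \<le> 1" and cubes: "\<And>m. e m \<noteq> 0 \<Longrightarrow> \<exists>n. m = n ^ 3"
  shows "\<exists>s. (\<lambda>n. e (Suc n) / real (Suc n)) sums s \<and> s \<le> zeta3"
proof -
  define r where "r n = e (Suc n) / real (Suc n)" for n
  define g where "g k = Suc k ^ 3 - 1" for k
  have Suc_g: "Suc (g k) = Suc k ^ 3" for k
    by (simp add: g_def)
  have "strict_mono g"
  proof (rule strict_monoI)
    fix a b :: nat
    assume "a < b"
    then have "Suc a ^ 3 < Suc b ^ 3"
      by (intro power_strict_mono) auto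
    then show "g a < g b"
      using Suc_g[of a] Suc_g[of b] by simp
  qed
  moreover have "r n = 0" if "n \<notin> range g" for n
  proof -
    have "Suc n \<noteq> k ^ 3" for k
    proof (cases k)
      case (Suc j)
      then show ?thesis
        using that Suc_g[of j] by (metis Suc_inject rangeI)
    qed simp
    then show ?thesis
      using cubes[of "Suc n"] by (auto simp: r_def)
  qed
  moreover have r_g: "0 \<le> r (g k) \<and> r (g k) \<le> 1 / real (Suc k) ^ 3" for k
  proof -
    have "r (g k) = e (Suc k ^ 3) / real (Suc k ^ 3)"
      unfolding r_def Suc_g ..
    then show ?thesis
      using bounds[of "Suc k ^ 3"] by (simp add: divide_right_mono del: of_nat_Suc)
  qed
  then have "summable (\<lambda>k. r (g k))"
    by (intro summable_comparison_test'[OF summable_inverse_Suc_power[of 3]]) auto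
  ultimately have "r sums (\<Sum>k. r (g k))"
    using sums_mono_reindex summable_sums by blast
  moreover have "(\<Sum>k. r (g k)) \<le> zeta3"
    unfolding zeta3_def
    using r_g \<open>summable (\<lambda>k. r (g k))\<close> summable_inverse_Suc_power[of 3]
    by (intro suminf_le) auto
  ultimately show ?thesis
    unfolding r_def by blast
qed

lemma series_le_1_if_le_inverse_squares:
  fixes v :: "nat \<Rightarrow> real"
  assumes nonneg: "\<And>n. 0 \<le> v n" and "v 0 = 0" and le: "\<And>n. v n \<le> 1 / real (Suc n) ^ 2"
  shows "summable v \<and> suminf v \<le> 1"
proof -
  define t where "t = (\<lambda>n. 1 / real (Suc n) - 1 / real (Suc (Suc n)))"
  have "(\<lambda>n. 1 / real (Suc n)) \<longlonglongrightarrow> 0"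
    using LIMSEQ_inverse_real_of_nat by (simp add: inverse_eq_divide)
  from telescope_sums'[OF this] have "t sums 1"
    unfolding t_def by simp
  have v_le_t: "v (Suc n) \<le> t n" for n
  proof -
    have "real (Suc n) * real (Suc (Suc n)) \<le> real (Suc (Suc n)) ^ 2"
      unfolding power2_eq_square by (intro mult_right_mono) auto
    then have "1 / real (Suc (Suc n)) ^ 2 \<le> 1 / (real (Suc n) * real (Suc (Suc n)))"
      by (rule divide_left_mono) (simp_all del: of_nat_Suc)
    also have "\<dots> = t n"
      by (simp add: t_def field_simps)
    finally show ?thesis
      using le[of "Suc n"] by linarith
  qed
  have "summable (\<lambda>n. v (Suc n))"
    by (rule summable_comparison_test'[OF sums_summable[OF \<open>t sums 1\<close>]]) (simp add: nonneg v_le_t)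
  then have "summable v"
    by (simp add: summable_Suc_iff)
  have "suminf v = (\<Sum>n. v (Suc n))"
    using suminf_split_head[OF \<open>summable v\<close>] \<open>v 0 = 0\<close> by simp
  also have "\<dots> \<le> suminf t"
    using v_le_t \<open>summable (\<lambda>n. v (Suc n))\<close> sums_summable[OF \<open>t sums 1\<close>] by (intro suminf_le) auto
  also have "\<dots> = 1"
    using \<open>t sums 1\<close> sums_unique by metis
  finally show ?thesis
    using \<open>summable v\<close> by simp
qed

locale random_cubic_model = prob_space M for M :: "'a measure" +
  fixes X :: "nat \<Rightarrow> 'a \<Rightarrow> complex"
  assumes measurable_X [measurable]: "\<And>p. prime p \<Longrightarrow> X p \<in> borel_measurable M"
    and indep_X: "indep_vars (\<lambda>_. borel) X {p. prime p}"
    and prob_X_eq_0: "\<And>p. prime p \<Longrightarrow> prob {\<omega>\<in>space M. X p \<omega> = 0} = delta p"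
    and prob_X_eq_root: "\<And>p z. prime p \<Longrightarrow> z \<in> {1, omega3, omega3\<^sup>2} \<Longrightarrow>
                           prob {\<omega>\<in>space M. X p \<omega> = z} = (1 - delta p) / 3"
begin

lemma AE_X_in_cube_roots_or_0:
  assumes "prime p"
  shows "AE \<omega> in M. X p \<omega> \<in> {0, 1, omega3, omega3 ^ 2}"
  using assms by (intro AE_in_finite_range)
    (simp_all add: sum_zero_and_cube_roots prob_X_eq_0 prob_X_eq_root field_simps)

lemma has_bochner_integral_X_power:
  assumes "prime p"
  shows "has_bochner_integral M (\<lambda>\<omega>. X p \<omega> ^ a)
           (of_real (delta p) * 0 ^ a + of_real ((1 - delta p) / 3) * (1 + omega3 ^ a + omega3 ^ (2 * a)))"
  using has_bochner_integral_finite_range[OF _ _ _ AE_X_in_cube_roots_or_0, of p "\<lambda>v. v ^ a"] assms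
  by (simp add: sum_zero_and_cube_roots prob_X_eq_0 prob_X_eq_root scaleR_conv_of_real
      algebra_simps power_mult[symmetric])

lemma integrable_X_power: "prime p \<Longrightarrow> integrable M (\<lambda>\<omega>. X p \<omega> ^ a)"
  by (rule integrable.intros[OF has_bochner_integral_X_power])

lemma expectation_X_power:
  assumes "prime p" "a > 0"
  shows "(\<integral>\<omega>. X p \<omega> ^ a \<partial>M) = (if 3 dvd a then of_real (1 - delta p) else 0)"
proof -
  have "(\<integral>\<omega>. X p \<omega> ^ a \<partial>M) =
          of_real (delta p) * 0 ^ a + of_real ((1 - delta p) / 3) * (1 + omega3 ^ a + omega3 ^ (2 * a))"
    by (rule has_bochner_integral_integral_eq[OF has_bochner_integral_X_power[OF assms(1)]])
  also have "\<dots> = of_real ((1 - delta p) / 3) * (if 3 dvd a then 3 else 0)"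
    using assms(2) by (simp add: cube_roots_power_sum)
  also have "\<dots> = (if 3 dvd a then of_real (1 - delta p) else 0)"
    by (simp add: of_real_divide)
  finally show ?thesis .
qed

lemma expectation_mult_ext_prod:
  "(\<integral>\<omega>. mult_ext X m \<omega> \<partial>M) = (\<Prod>p\<in>prime_factors m. \<integral>\<omega>. X p \<omega> ^ multiplicity p m \<partial>M)"
proof -
  have "prime_factors m \<subseteq> {p. prime p}"
    by (auto intro: in_prime_factors_imp_prime)
  then have indep: "indep_vars (\<lambda>_. borel) (\<lambda>p \<omega>. X p \<omega> ^ multiplicity p m) (prime_factors m)"
    by (intro indep_vars_compose2[OF indep_vars_subset[OF indep_X]]) auto
  show ?thesis
    unfolding mult_ext_def
    by (rule indep_vars_lebesgue_integral[OF finite_set_mset indep])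
      (simp add: integrable_X_power in_prime_factors_imp_prime)
qed

lemma expectation_mult_ext:
  assumes "m > 0"
  shows "(\<integral>\<omega>. mult_ext X m \<omega> \<partial>M) =
           (if \<exists>n. m = n ^ 3 then of_real (\<Prod>p\<in>prime_factors m. 1 - delta p) else 0)"
proof -
  have "(\<integral>\<omega>. mult_ext X m \<omega> \<partial>M) =
          (\<Prod>p\<in>prime_factors m. if 3 dvd multiplicity p m then of_real (1 - delta p) else 0)"
    unfolding expectation_mult_ext_prod using assms
    by (intro prod.cong refl expectation_X_power)
      (auto intro: in_prime_factors_imp_prime simp: prime_factors_multiplicity)
  then show ?thesis
    using assms by (auto simp: cube_iff_multiplicities_dvd of_real_prod)
qed

lemma measurable_mult_ext [measurable]: "mult_ext X m \<in> borel_measurable M"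
proof -
  have [measurable]: "X p \<in> borel_measurable M" if "p \<in> prime_factors m" for p
    using that by (blast intro: measurable_X in_prime_factors_imp_prime)
  show ?thesis
    unfolding mult_ext_def by measurable
qed

lemma AE_norm_mult_ext_le_1: "AE \<omega> in M. norm (mult_ext X m \<omega>) \<le> 1"
proof -
  have "AE \<omega> in M. \<forall>p\<in>prime_factors m. X p \<omega> \<in> {0, 1, omega3, omega3 ^ 2}"
    by (intro AE_finite_allI AE_X_in_cube_roots_or_0) (auto intro: in_prime_factors_imp_prime)
  then show ?thesis
  proof eventually_elim
    case (elim \<omega>)
    then have "norm (X p \<omega>) \<le> 1" if "p \<in> prime_factors m" for p
      using that by (auto simp: norm_power)
    then show ?case
      unfolding mult_ext_def prod_norm[symmetric] norm_power by (auto intro!: prod_le_1 power_le_one)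
  qed
qed

lemma cvariance_mult_ext_le:
  assumes "m > 0"
  shows "cvariance M (\<lambda>\<omega>. mult_ext X m \<omega> / of_nat m) \<le> 1 / real m ^ 2"
proof -
  define Z where "Z = (\<lambda>\<omega>. mult_ext X m \<omega> / of_nat m)"
  have Z_norm: "AE \<omega> in M. norm (Z \<omega>) \<le> 1 / real m"
    using AE_norm_mult_ext_le_1[of m]
    by eventually_elim (simp add: Z_def norm_divide divide_right_mono)
  then have Z_bound: "AE \<omega> in M. (cmod (Z \<omega>))\<^sup>2 \<le> 1 / real m ^ 2"
  proof eventually_elim
    case (elim \<omega>)
    then have "(cmod (Z \<omega>))\<^sup>2 \<le> (1 / real m)\<^sup>2"
      by (intro power_mono) auto
    then show ?case
      by (simp add: power_divide)
  qed
  have "integrable M Z"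
    using Z_norm by (intro integrable_const_bound[where B = "1 / real m"]) (auto simp: Z_def)
  moreover have "integrable M (\<lambda>\<omega>. (cmod (Z \<omega>))\<^sup>2)"
    using Z_bound by (intro integrable_const_bound[where B = "1 / real m ^ 2"]) (auto simp: Z_def)
  ultimately have "cvariance M Z \<le> (\<integral>\<omega>. (cmod (Z \<omega>))\<^sup>2 \<partial>M)"
    by (rule cvariance_le_second_moment)
  also have "\<dots> \<le> 1 / real m ^ 2"
    using Z_bound \<open>integrable M (\<lambda>\<omega>. (cmod (Z \<omega>))\<^sup>2)\<close> by (rule integral_le_const[rotated])
  finally show ?thesis
    unfolding Z_def .
qed

lemma expectation_series_le_zeta3:
  "\<exists>s::real. (\<lambda>n. \<integral>\<omega>. mult_ext X (Suc n) \<omega> / of_nat (Suc n) \<partial>M) sums complex_of_real s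
              \<and> s \<le> zeta3"
proof -
  define e where "e m = (if \<exists>n. m = n ^ 3 then \<Prod>p\<in>prime_factors m. 1 - delta p else 0)" for m
  have "0 \<le> e m \<and> e m \<le> 1" for m
    unfolding e_def using delta_nonneg delta_le_1
    by (auto intro!: prod_nonneg prod_le_1 simp: algebra_simps)
  moreover have "e m \<noteq> 0 \<Longrightarrow> \<exists>n. m = n ^ 3" for m
    by (auto simp: e_def split: if_splits)
  ultimately obtain s where "(\<lambda>n. e (Suc n) / real (Suc n)) sums s" "s \<le> zeta3"
    using cube_supported_series_le_zeta3 by blast
  moreover have "(\<lambda>n. \<integral>\<omega>. mult_ext X (Suc n) \<omega> / of_nat (Suc n) \<partial>M) =
                 (\<lambda>n. of_real (e (Suc n) / real (Suc n)))"
  proof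
    fix n
    show "(\<integral>\<omega>. mult_ext X (Suc n) \<omega> / of_nat (Suc n) \<partial>M) =
            of_real (e (Suc n) / real (Suc n))"
      using expectation_mult_ext[of "Suc n"]
      by (auto simp: e_def of_real_divide simp del: of_nat_Suc)
  qed
  ultimately show ?thesis
    using sums_of_real by metis
qed

lemma variance_series_le_1:
  "summable (\<lambda>n. cvariance M (\<lambda>\<omega>. mult_ext X (Suc n) \<omega> / of_nat (Suc n)))
   \<and> (\<Sum>n. cvariance M (\<lambda>\<omega>. mult_ext X (Suc n) \<omega> / of_nat (Suc n))) \<le> 1"
proof (rule series_le_1_if_le_inverse_squares)
  show "0 \<le> cvariance M (\<lambda>\<omega>. mult_ext X (Suc n) \<omega> / of_nat (Suc n))" for n
    unfolding cvariance_def by (rule integral_nonneg_AE) auto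
  show "cvariance M (\<lambda>\<omega>. mult_ext X (Suc 0) \<omega> / of_nat (Suc 0)) = 0"
    using cvariance_const[of 1] by (simp add: mult_ext_def)
  show "cvariance M (\<lambda>\<omega>. mult_ext X (Suc n) \<omega> / of_nat (Suc n)) \<le> 1 / real (Suc n) ^ 2" for n
    using cvariance_mult_ext_le[of "Suc n"] by simp
qed

end

theorem lemma4p2:
  fixes M :: "'a measure" and X :: "nat \<Rightarrow> 'a \<Rightarrow> complex"
  assumes prob: "prob_space M"
    and meas: "\<And>p. prime p \<Longrightarrow> X p \<in> borel_measurable M"
    and indep: "prob_space.indep_vars M (\<lambda>_. borel) X {p. prime p}"
    and dist0: "\<And>p. prime p \<Longrightarrow> measure M {\<omega>\<in>space M. X p \<omega> = 0} = delta p"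
    and dist1: "\<And>p z. prime p \<Longrightarrow> z \<in> {1, omega3, omega3\<^sup>2} \<Longrightarrow>
                 measure M {\<omega>\<in>space M. X p \<omega> = z} = (1 - delta p) / 3"
  shows "(\<forall>m::nat. m > 0 \<longrightarrow>
            (\<integral>\<omega>. mult_ext X m \<omega> \<partial>M) =
              (if \<exists>n. m = n ^ 3
               then complex_of_real (\<Prod>p\<in>prime_factors m. 1 - delta p)
               else 0)
          \<and> ((\<exists>n. m = n ^ 3) \<longrightarrow>
              (\<Prod>p\<in>prime_factors m. 1 - delta p) =
              (\<Prod>p\<in>{p\<in>prime_factors m. p mod 3 = 1}. real p / (real p + 2))))
       \<and> (\<exists>s::real. (\<lambda>n. \<integral>\<omega>. mult_ext X (Suc n) \<omega> / of_nat (Suc n) \<partial>M) sums complex_of_real s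
                    \<and> s \<le> zeta3)
       \<and> summable (\<lambda>n. cvariance M (\<lambda>\<omega>. mult_ext X (Suc n) \<omega> / of_nat (Suc n)))
       \<and> (\<Sum>n. cvariance M (\<lambda>\<omega>. mult_ext X (Suc n) \<omega> / of_nat (Suc n))) \<le> zeta6"
proof -
  interpret random_cubic_model M X
    using assms by (simp add: random_cubic_model_def random_cubic_model_axioms_def)
  show ?thesis
    using expectation_mult_ext prod_one_minus_delta expectation_series_le_zeta3
      variance_series_le_1 one_le_zeta6 by auto
qed

end
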